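(* Every celebrity game $\Gamma=\langle V,(w_u)_{u\in V},\alpha,\beta\rangle$ with $\beta>1$ has a Nash equilibrium. More precisely, with $n=|V|$ and $w_{\max}=\max_{u\in V}w_u$: if $\alpha\ge w_{\max}$ then the edgeless graph $I_n$ on $V$ is a Nash equilibrium graph of $\Gamma$; if $\alpha<w_{\max}$ then a star graph $S_n$ on $V$ (a tree in which one vertex is adjacent to all the others) is a Nash equilibrium graph of $\Gamma$, while $I_n$ is not.
   Context: A celebrity game $\Gamma=\langle V,(w_u)_{u\in V},\alpha,\beta\rangle$ consists of a set of players $V=\{1,\dots,n\}$, celebrity weights $w_u>0$, a link cost $\alpha>0$ and a critical distance $\beta$ with $1\le\beta\le n-1$. A strategy of player $u$ is a set $S_u\subseteq V\setminus\{u\}$; a strategy profile is $S=(S_1,\dots,S_n)$; its outcome graph $G[S]$ is the undirected graph on $V$ with edge set $\{\{u,v\}: u\in S_v\text{ or }v\in S_u\}$. With $d_G$ the graph distance (infinite between different connected components), the cost of player $u$ is $c_u(S)=\alpha|S_u|+\sum_{v:\,d_{G[S]}(u,v)>\beta}w_v$. $S$ is a Nash equilibrium if no player can strictly decrease its cost by changing only its own strategy; a graph $G$ is a Nash equilibrium graph of $\Gamma$ if $G=G[S]$ for some Nash equilibrium $S$. *)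

theory Defs
  imports Main "HOL-Library.Extended_Nat"
begin

text \<open>Players are V = {1..n}. A strategy profile is a function S :: nat => nat set.
  Undirected graphs on V are represented by their edge sets (sets of 2-element sets).\<close>

definition players :: "nat \<Rightarrow> nat set" where
  "players n = {1..n}"

definition valid_profile :: "nat \<Rightarrow> (nat \<Rightarrow> nat set) \<Rightarrow> bool" where
  "valid_profile n S \<longleftrightarrow> (\<forall>u \<in> players n. S u \<subseteq> players n - {u})"

definition outcome :: "nat \<Rightarrow> (nat \<Rightarrow> nat set) \<Rightarrow> nat set set" where
  "outcome n S = {{u, v} | u v. u \<in> players n \<and> v \<in> S u}"

definition adj :: "nat set set \<Rightarrow> (nat \<times> nat) set" where
  "adj G = {(u, v). {u, v} \<in> G \<and> u \<noteq> v}"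

text \<open>Graph distance (infinite between different components).\<close>
definition gdist :: "nat set set \<Rightarrow> nat \<Rightarrow> nat \<Rightarrow> enat" where
  "gdist G u v = Inf {enat k | k. (u, v) \<in> (adj G) ^^ k}"

definition cost :: "nat \<Rightarrow> (nat \<Rightarrow> real) \<Rightarrow> real \<Rightarrow> nat \<Rightarrow> (nat \<Rightarrow> nat set) \<Rightarrow> nat \<Rightarrow> real" where
  "cost n w \<alpha> \<beta> S u = \<alpha> * real (card (S u))
     + (\<Sum>v \<in> {v \<in> players n. gdist (outcome n S) u v > enat \<beta>}. w v)"

definition is_NE :: "nat \<Rightarrow> (nat \<Rightarrow> real) \<Rightarrow> real \<Rightarrow> nat \<Rightarrow> (nat \<Rightarrow> nat set) \<Rightarrow> bool" where
  "is_NE n w \<alpha> \<beta> S \<longleftrightarrow> valid_profile n S \<and>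
     (\<forall>u \<in> players n. \<forall>T. T \<subseteq> players n - {u} \<longrightarrow>
        cost n w \<alpha> \<beta> S u \<le> cost n w \<alpha> \<beta> (S(u := T)) u)"

definition is_NE_graph :: "nat \<Rightarrow> (nat \<Rightarrow> real) \<Rightarrow> real \<Rightarrow> nat \<Rightarrow> nat set set \<Rightarrow> bool" where
  "is_NE_graph n w \<alpha> \<beta> G \<longleftrightarrow> (\<exists>S. is_NE n w \<alpha> \<beta> S \<and> outcome n S = G)"

definition edgeless :: "nat set set" where
  "edgeless = {}"

definition star :: "nat \<Rightarrow> nat \<Rightarrow> nat set set" where
  "star n c = {{c, v} | v. v \<in> players n \<and> v \<noteq> c}"

end

theory Submission
  imports Defs
begin

text \<open>If every player's weight is at most \<alpha>, buying a link never pays: it costs \<alpha> and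
  can save at most the weight of its other end, so the empty profile is an equilibrium.
  Otherwise let c be a heaviest player, so \<alpha> < w c. In the star centred at c every two
  players are at distance at most 2 \<le> \<beta>; a leaf can only lose by dropping its single
  link (paying at least w c \<ge> \<alpha>) or by buying more, and the centre buys nothing. In the
  edgeless graph, on the other hand, any other player gains w c - \<alpha> > 0 by linking to c.\<close>

abbreviation far_players :: "nat \<Rightarrow> (nat \<Rightarrow> nat set) \<Rightarrow> nat \<Rightarrow> nat \<Rightarrow> nat set" where
  "far_players n S \<beta> u \<equiv> {v \<in> players n. enat \<beta> < gdist (outcome n S) u v}"

lemma adj_iff: "(x, y) \<in> adj G \<longleftrightarrow> {x, y} \<in> G \<and> x \<noteq> y"
  by (simp add: adj_def)

lemma relpow_adj_closed:
  assumes "u \<in> R" and closed: "\<And>x y. x \<in> R \<Longrightarrow> (x, y) \<in> adj G \<Longrightarrow> y \<in> R"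
    and "(u, v) \<in> adj G ^^ k"
  shows "v \<in> R"
  using assms(3)
proof (induction k arbitrary: v)
  case 0
  then show ?case using \<open>u \<in> R\<close> by simp
next
  case (Suc k)
  then obtain y where "(u, y) \<in> adj G ^^ k" "(y, v) \<in> adj G" by auto
  then show ?case using Suc.IH closed by blast
qed

lemma gdist_le_relpow: "(u, v) \<in> adj G ^^ k \<Longrightarrow> gdist G u v \<le> enat k"
  unfolding gdist_def by (rule Inf_lower) auto

lemma gdist_self: "gdist G u u = 0"
  using gdist_le_relpow[where v = u and k = 0] by (simp add: zero_enat_def[symmetric])

lemma gdist_edge: "{u, v} \<in> G \<Longrightarrow> gdist G u v \<le> 1"
  using gdist_le_relpow[where k = 1] gdist_self[of G u]
  by (cases "u = v") (auto simp: adj_iff one_enat_def)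

lemma gdist_infinite_outside_closed:
  assumes "u \<in> R" "\<And>x y. x \<in> R \<Longrightarrow> (x, y) \<in> adj G \<Longrightarrow> y \<in> R" "v \<notin> R"
  shows "gdist G u v = \<infinity>"
proof -
  have "\<forall>k. (u, v) \<notin> adj G ^^ k"
    using relpow_adj_closed[where u = u and R = R and v = v] assms by blast
  then show ?thesis by (simp add: gdist_def top_enat_def[symmetric])
qed

lemma cost_ge:
  fixes w :: "nat \<Rightarrow> real" and \<alpha> :: real
  assumes "\<forall>v\<in>players n. 0 \<le> w v" "A \<subseteq> far_players n S \<beta> u"
  shows "\<alpha> * card (S u) + sum w A \<le> cost n w \<alpha> \<beta> S u"
proof -
  have "sum w A \<le> sum w (far_players n S \<beta> u)"
    by (rule sum_mono2) (use assms in \<open>auto simp: players_def\<close>)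
  then show ?thesis unfolding cost_def by simp
qed

lemma cost_le:
  fixes w :: "nat \<Rightarrow> real" and \<alpha> :: real
  assumes "\<forall>v\<in>players n. 0 \<le> w v" "far_players n S \<beta> u \<subseteq> B" "B \<subseteq> players n"
  shows "cost n w \<alpha> \<beta> S u \<le> \<alpha> * card (S u) + sum w B"
proof -
  have "sum w (far_players n S \<beta> u) \<le> sum w B"
    by (rule sum_mono2) (use assms in \<open>auto simp: players_def intro: finite_subset\<close>)
  then show ?thesis unfolding cost_def by simp
qed

lemma outcome_single_buyer:
  "u \<in> players n \<Longrightarrow> outcome n ((\<lambda>_. {})(u := T)) = {{u, v} | v. v \<in> T}"
  by (auto simp: outcome_def)

lemma edgeless_profile_is_NE:
  assumes w_nonneg: "\<forall>v\<in>players n. 0 \<le> w v" and w_le: "\<forall>v\<in>players n. w v \<le> \<alpha>"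
  shows "is_NE n w \<alpha> \<beta> (\<lambda>_. {})"
  unfolding is_NE_def
proof (intro conjI ballI allI impI)
  show "valid_profile n (\<lambda>_. {})" by (simp add: valid_profile_def)
next
  fix u T assume u: "u \<in> players n" and T: "T \<subseteq> players n - {u}"
  have fin: "finite (players n)" by (simp add: players_def)
  have near_self: "far_players n (\<lambda>_. {}) \<beta> u \<subseteq> players n - {u}"
    by (auto simp: gdist_self)
  have before: "cost n w \<alpha> \<beta> (\<lambda>_. {}) u \<le> sum w (players n - {u})"
    using cost_le[OF w_nonneg near_self Diff_subset] by simp
  have unreached: "players n - {u} - T \<subseteq> far_players n ((\<lambda>_. {})(u := T)) \<beta> u"
  proof
    fix v assume v: "v \<in> players n - {u} - T"
    have "gdist (outcome n ((\<lambda>_. {})(u := T))) u v = \<infinity>"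
      by (rule gdist_infinite_outside_closed[where R = "insert u T"])
        (use v in \<open>auto simp: outcome_single_buyer[OF u] adj_iff doubleton_eq_iff\<close>)
    then show "v \<in> far_players n ((\<lambda>_. {})(u := T)) \<beta> u" using v by simp
  qed
  have after: "\<alpha> * card T + sum w (players n - {u} - T) \<le> cost n w \<alpha> \<beta> ((\<lambda>_. {})(u := T)) u"
    using cost_ge[OF w_nonneg unreached] by simp
  have "sum w (players n - {u}) = sum w T + sum w (players n - {u} - T)"
    using T fin by (metis finite_Diff sum.subset_diff add.commute)
  moreover have "sum w T \<le> card T * \<alpha>"
    using sum_bounded_above[of T w \<alpha>] T w_le by auto
  ultimately show "cost n w \<alpha> \<beta> (\<lambda>_. {}) u \<le> cost n w \<alpha> \<beta> ((\<lambda>_. {})(u := T)) u"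
    using before after by (simp add: algebra_simps)
qed

lemma edgeless_not_NE_graph:
  assumes w_nonneg: "\<forall>v\<in>players n. 0 \<le> w v"
    and m: "m \<in> players n" and u: "u \<in> players n" "u \<noteq> m"
    and "\<alpha> < w m" and "1 \<le> \<beta>"
  shows "\<not> is_NE_graph n w \<alpha> \<beta> edgeless"
proof
  assume "is_NE_graph n w \<alpha> \<beta> edgeless"
  then obtain S where NE: "is_NE n w \<alpha> \<beta> S" and no_edges: "outcome n S = {}"
    by (auto simp: is_NE_graph_def edgeless_def)
  have S_empty: "S x = {}" if "x \<in> players n" for x
    using no_edges that unfolding outcome_def by blast
  have fin: "finite (players n)" by (simp add: players_def)
  have isolated: "players n - {u} \<subseteq> far_players n S \<beta> u"
  proof
    fix v assume v: "v \<in> players n - {u}"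
    have "gdist (outcome n S) u v = \<infinity>"
      by (rule gdist_infinite_outside_closed[where R = "{u}"]) (use v in \<open>auto simp: no_edges adj_iff\<close>)
    then show "v \<in> far_players n S \<beta> u" using v by simp
  qed
  have before: "sum w (players n - {u}) \<le> cost n w \<alpha> \<beta> S u"
    using cost_ge[OF w_nonneg isolated] S_empty[OF u(1)] by simp
  have linked: "outcome n (S(u := {m})) = {{u, m}}"
    using u S_empty unfolding outcome_def by auto
  have "gdist (outcome n (S(u := {m}))) u m \<le> 1"
    by (rule gdist_edge) (simp add: linked)
  then have near_m: "far_players n (S(u := {m})) \<beta> u \<subseteq> players n - {u} - {m}"
    using \<open>1 \<le> \<beta>\<close> by (auto simp: gdist_self one_enat_def dest: order.strict_trans2)
  have after: "cost n w \<alpha> \<beta> (S(u := {m})) u \<le> \<alpha> + sum w (players n - {u} - {m})"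
    using cost_le[OF w_nonneg near_m] by auto
  have "sum w (players n - {u}) = w m + sum w (players n - {u} - {m})"
    using u m fin by (metis Diff_iff insertE sum.remove finite_Diff singletonD)
  moreover have "cost n w \<alpha> \<beta> S u \<le> cost n w \<alpha> \<beta> (S(u := {m})) u"
    using NE u m unfolding is_NE_def by auto
  ultimately show False using before after \<open>\<alpha> < w m\<close> by simp
qed

definition star_profile :: "nat \<Rightarrow> nat \<Rightarrow> nat set" where
  "star_profile c x = (if x = c then {} else {c})"

lemma outcome_star_profile: "outcome n (star_profile c) = star n c"
  unfolding outcome_def star_def star_profile_def by (auto simp: insert_commute)

lemma star_gdist_le_2:
  assumes "c \<in> players n" "u \<in> players n" "v \<in> players n"
  shows "gdist (star n c) u v \<le> 2"
proof -
  have spoke: "(x, c) \<in> adj (star n c) \<and> (c, x) \<in> adj (star n c)"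
    if "x \<in> players n" "x \<noteq> c" for x
    using that by (auto simp: star_def adj_iff insert_commute)
  consider "u = v" | "u \<noteq> v" "u = c \<or> v = c" | "u \<noteq> c" "v \<noteq> c" by blast
  then show ?thesis
  proof cases
    case 1
    then show ?thesis by (simp add: gdist_self)
  next
    case 2
    then have "{u, v} \<in> star n c" using assms by (auto simp: star_def insert_commute)
    then have "gdist (star n c) u v \<le> 1" by (rule gdist_edge)
    then show ?thesis by (rule order_trans) (simp add: one_enat_def numeral_eq_enat)
  next
    case 3
    then have "(u, v) \<in> adj (star n c) ^^ 2"
      using spoke[of u] spoke[of v] assms by (auto simp: numeral_2_eq_2 relcomp_unfold)
    then show ?thesis using gdist_le_relpow by (simp add: numeral_eq_enat)
  qed
qed

lemma star_profile_is_NE: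
  assumes w_nonneg: "\<forall>v\<in>players n. 0 \<le> w v" and c: "c \<in> players n"
    and "0 \<le> \<alpha>" "\<alpha> \<le> w c" and "2 \<le> \<beta>"
  shows "is_NE n w \<alpha> \<beta> (star_profile c)"
  unfolding is_NE_def
proof (intro conjI ballI allI impI)
  show "valid_profile n (star_profile c)"
    using c by (auto simp: valid_profile_def star_profile_def)
next
  fix u T assume u: "u \<in> players n" and T: "T \<subseteq> players n - {u}"
  have "gdist (outcome n (star_profile c)) u v \<le> enat \<beta>" if "v \<in> players n" for v
    using star_gdist_le_2[OF c u that] \<open>2 \<le> \<beta>\<close>
    by (simp add: outcome_star_profile numeral_eq_enat) (metis enat_ord_simps(1) order_trans)
  then have nobody_far: "far_players n (star_profile c) \<beta> u \<subseteq> {}"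
    by (auto simp: not_less[symmetric])
  have before: "cost n w \<alpha> \<beta> (star_profile c) u \<le> \<alpha> * card (star_profile c u)"
    using cost_le[OF w_nonneg nobody_far] by simp
  have after: "\<alpha> * card T \<le> cost n w \<alpha> \<beta> ((star_profile c)(u := T)) u"
    using cost_ge[OF w_nonneg empty_subsetI, where S = "(star_profile c)(u := T)" and u = u] by simp
  consider "u = c" | "u \<noteq> c" "T \<noteq> {}" | "u \<noteq> c" "T = {}" by blast
  then show "cost n w \<alpha> \<beta> (star_profile c) u \<le> cost n w \<alpha> \<beta> ((star_profile c)(u := T)) u"
  proof cases
    case 1
    have "0 \<le> \<alpha> * card T" using \<open>0 \<le> \<alpha>\<close> by simp
    then show ?thesis using before after 1 by (simp add: star_profile_def)
  next
    case 2
    have "finite T" using T finite_subset by (auto simp: players_def)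
    then have "\<alpha> \<le> \<alpha> * card T"
      using 2 \<open>0 \<le> \<alpha>\<close> by (simp add: mult_le_cancel_left1 Suc_le_eq card_gt_0_iff)
    then show ?thesis using before after 2 by (simp add: star_profile_def)
  next
    case 3
    have "outcome n ((star_profile c)(u := T)) = {{x, c} | x. x \<in> players n \<and> x \<noteq> c \<and> x \<noteq> u}"
      using u 3 unfolding outcome_def star_profile_def by (auto simp: insert_commute)
    then have "gdist (outcome n ((star_profile c)(u := T))) u c = \<infinity>"
      by (intro gdist_infinite_outside_closed[where R = "{u}"]) (use 3 in \<open>auto simp: adj_iff doubleton_eq_iff\<close>)
    then have centre_lost: "{c} \<subseteq> far_players n ((star_profile c)(u := T)) \<beta> u" using c by simp
    have "w c \<le> cost n w \<alpha> \<beta> ((star_profile c)(u := T)) u"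
      using cost_ge[OF w_nonneg centre_lost] 3 by simp
    then show ?thesis using before 3 \<open>\<alpha> \<le> w c\<close> by (simp add: star_profile_def)
  qed
qed

lemma exists_other_player: "2 \<le> n \<Longrightarrow> \<exists>u\<in>players n. u \<noteq> c"
  by (rule bexI[of _ "if c = 1 then 2 else 1"]) (auto simp: players_def)

theorem proposition4:
  fixes n :: nat and w :: "nat \<Rightarrow> real" and \<alpha> :: real and \<beta> :: nat
  assumes "\<forall>u \<in> players n. w u > 0"
    and "\<alpha> > 0"
    and "1 \<le> \<beta>" and "\<beta> \<le> n - 1"
    and "\<beta> > 1"
  shows "(\<exists>S. is_NE n w \<alpha> \<beta> S)
    \<and> (\<alpha> \<ge> Max (w ` players n) \<longrightarrow> is_NE_graph n w \<alpha> \<beta> edgeless)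
    \<and> (\<alpha> < Max (w ` players n) \<longrightarrow>
          (\<exists>c \<in> players n. is_NE_graph n w \<alpha> \<beta> (star n c))
          \<and> \<not> is_NE_graph n w \<alpha> \<beta> edgeless)"
proof -
  have w_nonneg: "\<forall>v\<in>players n. 0 \<le> w v" using assms(1) by auto
  have "3 \<le> n" using assms(4,5) by simp
  then have fin: "finite (players n)" and "players n \<noteq> {}" by (auto simp: players_def)
  then have "Max (w ` players n) \<in> w ` players n" by simp
  then obtain c where c: "c \<in> players n" "w c = Max (w ` players n)" by auto
  then have heaviest: "\<forall>v\<in>players n. w v \<le> w c" using fin by simp
  obtain u where u: "u \<in> players n" "u \<noteq> c"
    using exists_other_player[of n c] \<open>3 \<le> n\<close> by auto
  have edgeless_NE: "is_NE_graph n w \<alpha> \<beta> edgeless" if "w c \<le> \<alpha>"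
  proof -
    have "is_NE n w \<alpha> \<beta> (\<lambda>_. {})"
      using heaviest that by (intro edgeless_profile_is_NE[OF w_nonneg]) force
    then show ?thesis by (auto simp: is_NE_graph_def outcome_def edgeless_def)
  qed
  have star_NE: "is_NE_graph n w \<alpha> \<beta> (star n c)" if "\<alpha> < w c"
  proof -
    have "is_NE n w \<alpha> \<beta> (star_profile c)"
      using star_profile_is_NE[OF w_nonneg c(1)] that assms(2,5) by simp
    then show ?thesis using outcome_star_profile unfolding is_NE_graph_def by blast
  qed
  show ?thesis
  proof (cases "w c \<le> \<alpha>")
    case True
    then show ?thesis using edgeless_NE c(2) unfolding is_NE_graph_def by auto
  next
    case False
    then have "\<alpha> < w c" by simp
    then show ?thesis
      using star_NE edgeless_not_NE_graph[OF w_nonneg c(1) u _ assms(3)] c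
      unfolding is_NE_graph_def by auto
  qed
qed

end
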